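(* Let $h$ be an oriented cohomology theory with associated formal group law $F$, let $X$ be a smooth projective variety and let $L_1,\dots,L_r$ be line bundles on $X$. Then, in $h(X)$, $$c_r\Big(\prod_{l=1}^r(1-[L_l^\vee])\Big)\equiv(-1)^{r-1}(r-1)!\cdot\prod_{l=1}^rc_1(L_l)\mod\gamma^{r+1}h(X),$$ where the product on the left is taken in $K_0(X)$.
   Context: An oriented cohomology theory (in the sense of Levine–Morel / Panin–Smirnov) $h$ is a contravariant functor from smooth projective varieties over a field $k$ to commutative rings, with push-forwards for proper maps, equipped with characteristic classes $c_i:K_0(X)\to h(X)$, $i\ge1$. The total characteristic class is $c(x)=1+c_1(x)t+c_2(x)t^2+\dots\in h(X)[[t]]$; it satisfies $c(E)=1$ for a trivial bundle $E$, $c_i(E)=0$ for $i>\mathrm{rk}(E)$, and $c(E\oplus E')=c(E)c(E')$ (so $c$ is multiplicative on $K_0$). There is a formal group law $F$ over $R=h(\mathrm{Spec}\,k)$ with $c_1(L_1\otimes L_2)=c_1(L_1)+_Fc_1(L_2)$ for line bundles $L_1,L_2$. For $d\ge0$, $\gamma^dh(X)$ is the $R$-submodule of $h(X)$ generated by all products $c_1(L_1)\cdots c_1(L_l)$ with $l\ge d$ and $L_1,\dots,L_l$ line bundles on $X$. *)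

theory Defs
  imports Main
begin

text \<open>Abstract rendering of the data of an oriented cohomology theory h evaluated
on one fixed smooth projective variety X:
  'k = K_0(X), 'h = h(X), 'r = R = h(Spec k), phi : R \<rightarrow> h(X) the structure map,
  P \<subseteq> K_0(X) the set of classes of line bundles, dual L = [L^dual],
  c x i = c_i(x) (with c_0 = 1), a i j = coefficients of the formal group law F.\<close>

definition ring_hom_fun :: "('r::comm_ring_1 \<Rightarrow> 'h::comm_ring_1) \<Rightarrow> bool" where
  "ring_hom_fun phi \<longleftrightarrow> phi 0 = 0 \<and> phi 1 = 1 \<and>
     (\<forall>x y. phi (x + y) = phi x + phi y) \<and> (\<forall>x y. phi (x * y) = phi x * phi y)"

text \<open>Coefficients of a (commutative) formal group law
  F(x,y) = \<Sum> a i j x^i y^j with F(x,0) = x, F(0,y) = y.\<close>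
definition fgl_coeffs :: "(nat \<Rightarrow> nat \<Rightarrow> 'r::comm_ring_1) \<Rightarrow> bool" where
  "fgl_coeffs a \<longleftrightarrow> a 1 0 = 1 \<and> a 0 1 = 1 \<and>
     (\<forall>i. i \<noteq> 1 \<longrightarrow> a i 0 = 0) \<and> (\<forall>j. j \<noteq> 1 \<longrightarrow> a 0 j = 0) \<and>
     (\<forall>i j. a i j = a j i)"

definition line_bundle_classes :: "'k::comm_ring_1 set \<Rightarrow> ('k \<Rightarrow> 'k) \<Rightarrow> bool" where
  "line_bundle_classes P dual \<longleftrightarrow> 1 \<in> P \<and> (\<forall>L\<in>P. \<forall>M\<in>P. L * M \<in> P) \<and>
     (\<forall>L\<in>P. dual L \<in> P \<and> L * dual L = 1)"

definition char_classes :: "'k::comm_ring_1 set \<Rightarrow> ('k \<Rightarrow> nat \<Rightarrow> 'h::comm_ring_1) \<Rightarrow> bool" where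
  "char_classes P c \<longleftrightarrow> (\<forall>x. c x 0 = 1) \<and>
     (\<forall>x y n. c (x + y) n = (\<Sum>i\<le>n. c x i * c y (n - i))) \<and>
     (\<forall>n\<ge>1. c 1 n = 0) \<and>
     (\<forall>L\<in>P. \<forall>n\<ge>2. c L n = 0)"

text \<open>c_1 of line bundles is nilpotent in h(X) (X smooth projective), so F can be evaluated
  on first Chern classes; and c_1(L \<otimes> M) = F(c_1 L, c_1 M).\<close>
definition fgl_compatible ::
  "('r::comm_ring_1 \<Rightarrow> 'h::comm_ring_1) \<Rightarrow> (nat \<Rightarrow> nat \<Rightarrow> 'r) \<Rightarrow> 'k::comm_ring_1 set \<Rightarrow>
   ('k \<Rightarrow> nat \<Rightarrow> 'h) \<Rightarrow> bool" where
  "fgl_compatible phi a P c \<longleftrightarrow> (\<forall>L\<in>P. \<exists>N. c L 1 ^ N = 0) \<and>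
     (\<forall>L\<in>P. \<forall>M\<in>P. \<forall>N. c L 1 ^ N = 0 \<and> c M 1 ^ N = 0 \<longrightarrow>
        c (L * M) 1 = (\<Sum>i<N. \<Sum>j<N. phi (a i j) * c L 1 ^ i * c M 1 ^ j))"

definition oriented_data ::
  "('r::comm_ring_1 \<Rightarrow> 'h::comm_ring_1) \<Rightarrow> (nat \<Rightarrow> nat \<Rightarrow> 'r) \<Rightarrow> 'k::comm_ring_1 set \<Rightarrow>
   ('k \<Rightarrow> 'k) \<Rightarrow> ('k \<Rightarrow> nat \<Rightarrow> 'h) \<Rightarrow> bool" where
  "oriented_data phi a P dual c \<longleftrightarrow> ring_hom_fun phi \<and> fgl_coeffs a \<and>
     line_bundle_classes P dual \<and> char_classes P c \<and> fgl_compatible phi a P c"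

text \<open>gamma^d h(X): the R-submodule of h(X) generated by products
  c_1(L_1) \<cdots> c_1(L_l), l \<ge> d, L_i line bundles (R acting through phi).\<close>
inductive_set gamma_filt ::
  "('r::comm_ring_1 \<Rightarrow> 'h::comm_ring_1) \<Rightarrow> 'k::comm_ring_1 set \<Rightarrow> ('k \<Rightarrow> nat \<Rightarrow> 'h) \<Rightarrow> nat \<Rightarrow> 'h set"
  for phi P c d where
  zero: "0 \<in> gamma_filt phi P c d"
| add: "x \<in> gamma_filt phi P c d \<Longrightarrow> y \<in> gamma_filt phi P c d \<Longrightarrow> x + y \<in> gamma_filt phi P c d"
| gen: "set Ls \<subseteq> P \<Longrightarrow> length Ls \<ge> d \<Longrightarrow>
          phi s * prod_list (map (\<lambda>L. c L 1) Ls) \<in> gamma_filt phi P c d"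

end

theory Submission
  imports Defs "HOL-Computational_Algebra.Formal_Power_Series"
begin

text \<open>
  Write x_l = c_1(L_l^\<vee>) and K_r = \<Prod>_{l\<le>r} (1 - [L_l^\<vee>]) in K_0(X).
  Expanding K_r, the total class c(M K_r) of a line bundle M times K_r is a product
  of factors (1 + c_1(N) t)^{\<pm>1} over line bundles N.  Modulo the gamma filtration,
  c_1 is additive on tensor products (the formal group law is x + y + higher terms)
  and c_1(L^\<vee>) = -c_1(L), so c(M K_r) agrees, degree by degree to first order, with
  the "additive model" obtained by replacing every c_1(M \<otimes> L_S^\<vee>) by
  c_1(M) + \<Sum>_{l\<in>S} x_l.  In the model, the t^r coefficient is computed exactly:
  it equals -(r-1)! x_1 \<cdots> x_r, and all coefficients of degree 1..r-1 vanish.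
\<close>

unbundle fps_syntax

lemma fps_compose_nth_as_poly:
  fixes a c :: "'a::comm_ring_1 fps"
  assumes c0: "c $ 0 = 0" and "m \<le> N"
  shows "(a oo c) $ m = (\<Sum>i\<le>N. fps_const (a $ i) * c ^ i) $ m"
proof -
  have "(\<Sum>i\<le>N. fps_const (a $ i) * c ^ i) $ m = (\<Sum>i\<le>N. a $ i * (c ^ i) $ m)"
    by (simp add: fps_sum_nth)
  also have "\<dots> = (\<Sum>i=0..m. a $ i * (c ^ i) $ m)"
    using assms startsby_zero_power_prefix[OF c0]
    by (intro sum.mono_neutral_right) auto
  finally show ?thesis by (simp add: fps_compose_nth)
qed

text \<open>Composition with a series without constant term is multiplicative,
  over an arbitrary commutative ring.\<close>
lemma fps_compose_mult_distrib_comm_ring: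
  fixes a b c :: "'a::comm_ring_1 fps"
  assumes c0: "c $ 0 = 0"
  shows "(a * b) oo c = (a oo c) * (b oo c)"
proof (rule fps_ext)
  fix n
  let ?A = "\<Sum>i\<le>n. fps_const (a $ i) * c ^ i" and ?B = "\<Sum>j\<le>n. fps_const (b $ j) * c ^ j"
  have high_powers_vanish: "(c ^ k) $ n = 0" if "n < k" for k
    using startsby_zero_power_prefix[OF c0] that by blast
  let ?t = "\<lambda>(i, j). a $ i * b $ j * (c ^ (i + j)) $ n"
  have "((a oo c) * (b oo c)) $ n = (?A * ?B) $ n"
    unfolding fps_mult_nth
    by (intro sum.cong refl) (simp add: fps_compose_nth_as_poly[OF c0, where N = n])
  also have "?A * ?B = (\<Sum>i\<le>n. \<Sum>j\<le>n. fps_const (a $ i * b $ j) * c ^ (i + j))"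
    by (simp add: sum_product power_add mult_ac)
  also have "\<dots> $ n = (\<Sum>i\<le>n. \<Sum>j\<le>n. a $ i * b $ j * (c ^ (i + j)) $ n)"
    by (simp add: fps_sum_nth)
  also have "\<dots> = sum ?t ({..n} \<times> {..n})"
    by (simp add: sum.cartesian_product)
  also have "\<dots> = sum ?t {(i, j). i + j \<le> n}"
    by (intro sum.mono_neutral_right) (auto simp: high_powers_vanish not_le intro: ccontr)
  also have "\<dots> = (\<Sum>s=0..n. \<Sum>i=0..s. a $ i * b $ (s - i) * (c ^ s) $ n)"
    by (rule sum_pair_less_iff)
  also have "\<dots> = ((a * b) oo c) $ n"
    by (simp add: fps_compose_nth fps_mult_nth sum_distrib_right)
  finally show "((a * b) oo c) $ n = ((a oo c) * (b oo c)) $ n" ..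
qed

lemma inverse_unique_comm:
  fixes a b c :: "'a::comm_monoid_mult"
  assumes "a * b = 1" and "a * c = 1"
  shows "b = c"
  by (metis assms mult.assoc mult.commute mult_1_right)

text \<open>The total class 1 + zt of a line bundle with first Chern class z, its inverse
  \<Sum> (-z)^n t^n, and the substitution series t/(1+zt).\<close>
definition lfac :: "'a::comm_ring_1 \<Rightarrow> 'a fps" where
  "lfac z = 1 + fps_const z * fps_X"

definition lfac_inv :: "'a::comm_ring_1 \<Rightarrow> 'a fps" where
  "lfac_inv z = Abs_fps (\<lambda>n. (- z) ^ n)"

definition shift_sub :: "'a::comm_ring_1 \<Rightarrow> 'a fps" where
  "shift_sub z = fps_X * lfac_inv z"

lemma lfac_nth: "lfac z $ n = (if n = 0 then 1 else if n = 1 then z else 0)"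
  by (simp add: lfac_def)

lemma lfac_inv_nth: "lfac_inv z $ n = (- z) ^ n"
  by (simp add: lfac_inv_def)

lemma lfac_times_inv: "lfac z * lfac_inv z = 1"
proof (rule fps_ext)
  fix n
  show "(lfac z * lfac_inv z) $ n = 1 $ n"
    by (cases n) (simp_all add: lfac_def lfac_inv_def algebra_simps)
qed

lemma shift_sub_times_lfac: "shift_sub z * lfac z = fps_X"
  by (simp add: shift_sub_def mult.assoc lfac_times_inv mult.commute[of "lfac_inv z"])

lemma shift_sub_nth_0 [simp]: "shift_sub z $ 0 = 0"
  by (simp add: shift_sub_def)

lemma lfac_shift: "lfac (w + z) = lfac z * (lfac w oo shift_sub z)"
proof -
  have "lfac w oo shift_sub z = 1 + fps_const w * shift_sub z"
    by (simp add: lfac_def fps_compose_add_distrib fps_compose_mult_distrib_comm_ring)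
  then have "lfac z * (lfac w oo shift_sub z) = lfac z + fps_const w * (shift_sub z * lfac z)"
    by (simp add: algebra_simps)
  also have "\<dots> = lfac z + fps_const w * fps_X"
    by (simp only: shift_sub_times_lfac)
  finally show ?thesis
    by (simp add: lfac_def algebra_simps flip: fps_const_add)
qed

lemma lfac_inv_shift: "lfac_inv (w + z) = lfac_inv z * (lfac_inv w oo shift_sub z)"
proof (rule inverse_unique_comm)
  show "lfac (w + z) * lfac_inv (w + z) = 1" by (rule lfac_times_inv)
  have "(lfac w oo shift_sub z) * (lfac_inv w oo shift_sub z) = 1"
    by (simp flip: fps_compose_mult_distrib_comm_ring add: lfac_times_inv)
  then show "lfac (w + z) * (lfac_inv z * (lfac_inv w oo shift_sub z)) = 1"
    by (simp add: lfac_shift lfac_times_inv mult_ac)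
qed

lemma shift_sub_power_nth:
  "(shift_sub z ^ n) $ m = (if m < n then 0 else (lfac_inv z ^ n) $ (m - n))"
  by (simp add: shift_sub_def power_mult_distrib fps_X_power_mult_nth)

lemma shift_sub_power_nth_same: "(shift_sub z ^ n) $ n = 1"
  by (simp add: shift_sub_power_nth fps_power_zeroth lfac_inv_nth)

lemma shift_sub_power_nth_Suc: "(shift_sub z ^ n) $ Suc n = - (of_nat n * z)"
  using fps_power_first_eq[of "lfac_inv z" n] by (simp add: shift_sub_power_nth lfac_inv_nth)

definition one_plus_at :: "nat \<Rightarrow> 'a::comm_ring_1 \<Rightarrow> 'a fps \<Rightarrow> bool" where
  "one_plus_at r a f \<longleftrightarrow> f $ 0 = 1 \<and> (\<forall>k. 0 < k \<and> k < r \<longrightarrow> f $ k = 0) \<and> f $ r = a"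

lemma compose_shift_sub_term_vanishes:
  assumes gap: "\<forall>i. 0 < i \<and> i < r \<longrightarrow> h $ i = 0" and "i < m" and "i < r"
  shows "h $ i * (shift_sub z ^ i) $ m = 0"
  using assms by (cases "i = 0") auto

lemma compose_shift_sub_low:
  assumes gap: "\<forall>i. 0 < i \<and> i < r \<longrightarrow> h $ i = 0" and "k \<le> r"
  shows "(h oo shift_sub z) $ k = h $ k"
proof (cases k)
  case (Suc j)
  have "(\<Sum>i=0..j. h $ i * (shift_sub z ^ i) $ Suc j) = 0"
    using compose_shift_sub_term_vanishes[OF gap] \<open>k \<le> r\<close> Suc by (intro sum.neutral) auto
  then show ?thesis
    by (simp add: Suc fps_compose_nth shift_sub_power_nth_same del: power_Suc)
qed simp

lemma compose_shift_sub_next: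
  assumes gap: "\<forall>i. 0 < i \<and> i < r \<longrightarrow> h $ i = 0" and "r \<ge> 1"
  shows "(h oo shift_sub z) $ Suc r = h $ Suc r - of_nat r * z * h $ r"
proof -
  have "(\<Sum>i<r. h $ i * (shift_sub z ^ i) $ Suc r) = 0"
    using compose_shift_sub_term_vanishes[OF gap] by (intro sum.neutral) auto
  then show ?thesis
    by (simp add: fps_compose_nth atLeast0AtMost lessThan_Suc_atMost[symmetric]
        shift_sub_power_nth_same shift_sub_power_nth_Suc algebra_simps del: power_Suc)
qed

lemma one_plus_at_step:
  assumes inv: "f * h = 1" and f: "one_plus_at r a f" and h: "one_plus_at r (- a) h"
    and "r \<ge> 1"
  shows "one_plus_at (Suc r) (of_nat r * y * a) (f * (h oo shift_sub y))"
proof -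
  define D where "D = (h oo shift_sub y) - h"
  have gap: "\<forall>i. 0 < i \<and> i < r \<longrightarrow> h $ i = 0" using h by (simp add: one_plus_at_def)
  have D_low: "D $ k = 0" if "k \<le> r" for k
    using compose_shift_sub_low[OF gap that] by (simp add: D_def)
  have D_next: "D $ Suc r = of_nat r * y * a"
    using compose_shift_sub_next[OF gap \<open>r \<ge> 1\<close>] h by (simp add: D_def one_plus_at_def)
  have fD_low: "(f * D) $ k = 0" if "k \<le> r" for k
    unfolding fps_mult_nth using that D_low by (intro sum.neutral) auto
  have "(\<Sum>i=1..Suc r. f $ i * D $ (Suc r - i)) = 0"
    using D_low by (intro sum.neutral) auto
  then have "(f * D) $ Suc r = f $ 0 * D $ Suc r"
    unfolding fps_mult_nth by (simp add: sum.atLeast_Suc_atMost)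
  then have fD_next: "(f * D) $ Suc r = of_nat r * y * a"
    using f D_next by (simp add: one_plus_at_def)
  have "f * (h oo shift_sub y) = 1 + f * D"
    by (simp add: D_def inv algebra_simps)
  then show ?thesis
    using fD_low[of 0] fD_low fD_next by (simp add: one_plus_at_def)
qed

text \<open>The additive model: with x the additive stand-ins for c_1(L_l^\<vee>) and z for c_1(M),
  add_model x r s z is the total class of \<pm>M \<Prod>_{l\<le>r}(1 - [L_l^\<vee>]) (sign + iff s)
  computed as if c_1 were additive, i.e.
  \<Prod>_{S \<subseteq> {1..r}} (1 + (z + \<Sum>_{l\<in>S} x_l) t)^{\<pm>(-1)^|S|}.\<close>
fun add_model :: "(nat \<Rightarrow> 'a::comm_ring_1) \<Rightarrow> nat \<Rightarrow> bool \<Rightarrow> 'a \<Rightarrow> 'a fps" where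
  "add_model x 0 s z = (if s then lfac z else lfac_inv z)"
| "add_model x (Suc r) s z = add_model x r s z * add_model x r (\<not> s) (z + x (Suc r))"

lemma add_model_inverse: "add_model x r s z * add_model x r (\<not> s) z = 1"
proof (induction r arbitrary: s z)
  case 0
  show ?case by (simp add: lfac_times_inv mult.commute)
next
  case (Suc r)
  have "add_model x (Suc r) s z * add_model x (Suc r) (\<not> s) z
      = (add_model x r s z * add_model x r (\<not> s) z)
        * (add_model x r (\<not> s) (z + x (Suc r))
           * add_model x r (\<not> \<not> s) (z + x (Suc r)))"
    by (simp add: mult_ac)
  then show ?case by (simp only: Suc.IH mult_1_left)
qed

lemma add_model_0_shift:
  "add_model x 0 s (w + z) = add_model x 0 s z * (add_model x 0 s w oo shift_sub z)"
  by (simp add: lfac_shift lfac_inv_shift)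

text \<open>For r \<ge> 1 the model is equivariant: moving the base point by z is the
  substitution t \<mapsto> t/(1+zt) (the correction factors of the r = 0 case cancel).\<close>
lemma add_model_shift:
  "add_model x (Suc r) s (w + z) = add_model x (Suc r) s w oo shift_sub z"
proof (induction r arbitrary: s w)
  case 0
  have "add_model x 1 s (w + z)
      = (add_model x 0 s z * add_model x 0 (\<not> s) z)
        * ((add_model x 0 s w oo shift_sub z)
           * (add_model x 0 (\<not> s) (w + x 1) oo shift_sub z))"
    using add_model_0_shift[of x s w z] add_model_0_shift[of x "\<not> s" "w + x 1" z]
    by (simp add: add_ac mult_ac)
  then show ?case
    by (simp only: add_model_inverse mult_1_left
        fps_compose_mult_distrib_comm_ring[OF shift_sub_nth_0, symmetric]) simp
next
  case (Suc r)
  have "add_model x (Suc (Suc r)) s (w + z)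
      = add_model x (Suc r) s (w + z)
        * add_model x (Suc r) (\<not> s) ((w + x (Suc (Suc r))) + z)"
    by (simp add: add_ac)
  then show ?case
    by (simp only: Suc.IH) (simp add: fps_compose_mult_distrib_comm_ring)
qed

lemma add_model_coeffs:
  assumes "r \<ge> 1"
  shows "one_plus_at r ((if s then -1 else 1) * (of_nat (fact (r - 1)) * (\<Prod>l=1..r. x l)))
           (add_model x r s 0)"
  using assms
proof (induction r arbitrary: s rule: dec_induct)
  case base
  show ?case by (simp add: one_plus_at_def lfac_nth lfac_inv_nth)
next
  case (step r)
  let ?a = "of_nat (fact (r - 1)) * (\<Prod>l=1..r. x l)"
  let ?sg = "\<lambda>s. if s then -1 else (1::'a)"
  obtain q where r: "r = Suc q" using step.hyps by (cases r) auto
  have "add_model x r (\<not> s) (0 + x (Suc r))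
      = add_model x r (\<not> s) 0 oo shift_sub (x (Suc r))"
    unfolding r by (rule add_model_shift)
  then have model_eq: "add_model x (Suc r) s 0
      = add_model x r s 0 * (add_model x r (\<not> s) 0 oo shift_sub (x (Suc r)))"
    by simp
  have "?sg (\<not> s) * ?a = - (?sg s * ?a)" by simp
  then have "one_plus_at (Suc r) (of_nat r * x (Suc r) * (?sg s * ?a))
          (add_model x r s 0 * (add_model x r (\<not> s) 0 oo shift_sub (x (Suc r))))"
    using step.IH[of "\<not> s"]
    by (intro one_plus_at_step[OF add_model_inverse step.IH[of s] _ step.hyps(1)]) simp
  moreover have "of_nat r * x (Suc r) * (?sg s * ?a)
      = ?sg s * (of_nat (fact (Suc r - 1)) * (\<Prod>l=1..Suc r. x l))"
    by (simp add: r algebra_simps)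
  ultimately show ?case by (simp only: model_eq)
qed

locale multiplicative_filtration =
  fixes Fil :: "nat \<Rightarrow> 'a::comm_ring_1 set"
  assumes zero_mem: "0 \<in> Fil d"
    and add_mem: "x \<in> Fil d \<Longrightarrow> y \<in> Fil d \<Longrightarrow> x + y \<in> Fil d"
    and uminus_mem: "x \<in> Fil d \<Longrightarrow> - x \<in> Fil d"
    and one_mem: "1 \<in> Fil 0"
    and mult_mem: "x \<in> Fil d \<Longrightarrow> y \<in> Fil e \<Longrightarrow> x * y \<in> Fil (d + e)"
    and antimono: "d \<le> e \<Longrightarrow> Fil e \<subseteq> Fil d"
begin

lemma diff_mem: "x \<in> Fil d \<Longrightarrow> y \<in> Fil d \<Longrightarrow> x - y \<in> Fil d"
  using add_mem[of x d "- y"] uminus_mem[of y d] by simp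

lemma sum_mem: "(\<And>i. i \<in> S \<Longrightarrow> f i \<in> Fil d) \<Longrightarrow> sum f S \<in> Fil d"
  by (induction S rule: infinite_finite_induct) (auto intro: zero_mem add_mem)

lemma power_mem: "u \<in> Fil 1 \<Longrightarrow> u ^ n \<in> Fil n"
  by (induction n) (auto intro: one_mem dest: mult_mem)

lemma power_diff_mem:
  assumes "u \<in> Fil 1" "v \<in> Fil 1" "u - v \<in> Fil 2"
  shows "u ^ n - v ^ n \<in> Fil (Suc n)"
proof (induction n)
  case 0 then show ?case by (simp add: zero_mem)
next
  case (Suc n)
  have "u * (u ^ n - v ^ n) \<in> Fil (1 + Suc n)" using Suc assms by (intro mult_mem)
  moreover have "(u - v) * v ^ n \<in> Fil (2 + n)" using assms by (intro mult_mem power_mem)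
  moreover have "u ^ Suc n - v ^ Suc n = u * (u ^ n - v ^ n) + (u - v) * v ^ n"
    by (simp add: algebra_simps)
  ultimately show ?case by (auto intro: add_mem)
qed

definition fil_congr :: "'a fps \<Rightarrow> 'a fps \<Rightarrow> bool" where
  "fil_congr A B \<longleftrightarrow> (\<forall>n. A $ n \<in> Fil n \<and> B $ n \<in> Fil n \<and> A $ n - B $ n \<in> Fil (Suc n))"

lemma fil_congr_mult:
  assumes AB: "fil_congr A B" and AB': "fil_congr A' B'"
  shows "fil_congr (A * A') (B * B')"
  unfolding fil_congr_def
proof (intro allI conjI)
  fix n
  have deg: "X $ i * Y $ (n - i) \<in> Fil n"
    if "X $ i \<in> Fil i" "Y $ (n - i) \<in> Fil (n - i)" "i \<le> n" for X Y :: "'a fps" and i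
    using mult_mem[OF that(1,2)] that(3) by simp
  show "(A * A') $ n \<in> Fil n" "(B * B') $ n \<in> Fil n"
    using AB AB' unfolding fps_mult_nth fil_congr_def by (auto intro!: sum_mem deg)
  have "(A $ i - B $ i) * A' $ (n - i) + B $ i * (A' $ (n - i) - B' $ (n - i)) \<in> Fil (Suc n)"
    if "i \<le> n" for i
  proof (rule add_mem)
    show "(A $ i - B $ i) * A' $ (n - i) \<in> Fil (Suc n)"
      using mult_mem[of _ "Suc i" _ "n - i"] AB AB' that by (simp add: fil_congr_def)
    show "B $ i * (A' $ (n - i) - B' $ (n - i)) \<in> Fil (Suc n)"
      using mult_mem[of _ i _ "Suc (n - i)"] AB AB' that by (simp add: fil_congr_def)
  qed
  moreover have "(A * A') $ n - (B * B') $ n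
      = (\<Sum>i=0..n. (A $ i - B $ i) * A' $ (n - i) + B $ i * (A' $ (n - i) - B' $ (n - i)))"
    unfolding fps_mult_nth sum_subtractf[symmetric] by (intro sum.cong) (simp_all add: algebra_simps)
  ultimately show "(A * A') $ n - (B * B') $ n \<in> Fil (Suc n)"
    by (auto intro: sum_mem)
qed

lemma fil_congr_lfac:
  assumes "u \<in> Fil 1" "v \<in> Fil 1" "u - v \<in> Fil 2"
  shows "fil_congr (lfac u) (lfac v)"
  unfolding fil_congr_def lfac_nth
  using assms by (auto simp: numeral_2_eq_2 one_mem zero_mem)

lemma fil_congr_lfac_inv:
  assumes "u \<in> Fil 1" "v \<in> Fil 1" "u - v \<in> Fil 2"
  shows "fil_congr (lfac_inv u) (lfac_inv v)"
proof -
  have nu: "- u \<in> Fil 1" and nv: "- v \<in> Fil 1" using assms by (auto intro: uminus_mem)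
  have "- u - - v \<in> Fil 2" using uminus_mem[OF assms(3)] by simp
  then show ?thesis
    unfolding fil_congr_def lfac_inv_nth
    using power_mem[OF nu] power_mem[OF nv] power_diff_mem[OF nu nv] by blast
qed

end

locale oriented_cohomology =
  fixes phi :: "'r::comm_ring_1 \<Rightarrow> 'h::comm_ring_1"
    and a :: "nat \<Rightarrow> nat \<Rightarrow> 'r"
    and P :: "'k::comm_ring_1 set"
    and dual :: "'k \<Rightarrow> 'k"
    and c :: "'k \<Rightarrow> nat \<Rightarrow> 'h"
  assumes data: "oriented_data phi a P dual c"
begin

abbreviation \<gamma> :: "nat \<Rightarrow> 'h set" where
  "\<gamma> d \<equiv> gamma_filt phi P c d"

lemma phi_hom:
  "phi 0 = 0" "phi 1 = 1" "phi (x + y) = phi x + phi y" "phi (x * y) = phi x * phi y"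
  using data by (auto simp: oriented_data_def ring_hom_fun_def)

lemma phi_minus_one: "phi (- 1) = - 1"
proof -
  have "phi (- 1) + phi 1 = 0"
    using phi_hom(3)[of "- 1" 1] phi_hom(1) by simp
  then show ?thesis
    by (simp add: phi_hom(2) eq_neg_iff_add_eq_0)
qed

lemma fgl_linear_terms: "a 0 0 = 0" "a 1 0 = 1" "a 0 1 = 1"
  using data by (auto simp: oriented_data_def fgl_coeffs_def)

lemma line_bundles: "1 \<in> P" "L \<in> P \<Longrightarrow> M \<in> P \<Longrightarrow> L * M \<in> P"
  "L \<in> P \<Longrightarrow> dual L \<in> P" "L \<in> P \<Longrightarrow> L * dual L = 1"
  using data by (auto simp: oriented_data_def line_bundle_classes_def)

lemma char_class_axioms: "c x 0 = 1" "c (x + y) n = (\<Sum>i\<le>n. c x i * c y (n - i))"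
  "n \<ge> 1 \<Longrightarrow> c 1 n = 0" "L \<in> P \<Longrightarrow> n \<ge> 2 \<Longrightarrow> c L n = 0"
  using data by (auto simp: oriented_data_def char_classes_def)

lemma c1_nilpotent: "L \<in> P \<Longrightarrow> \<exists>N. c L 1 ^ N = 0"
  using data by (simp add: oriented_data_def fgl_compatible_def)

lemma c1_tensor_fgl:
  "L \<in> P \<Longrightarrow> M \<in> P \<Longrightarrow> c L 1 ^ N = 0 \<Longrightarrow> c M 1 ^ N = 0 \<Longrightarrow>
     c (L * M) 1 = (\<Sum>i<N. \<Sum>j<N. phi (a i j) * c L 1 ^ i * c M 1 ^ j)"
  using data by (simp add: oriented_data_def fgl_compatible_def)

lemma gamma_scale: "x \<in> \<gamma> d \<Longrightarrow> phi s * x \<in> \<gamma> d"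
proof (induction x rule: gamma_filt.induct)
  case (gen Ls s')
  then show ?case
    using gamma_filt.gen[of Ls P d phi "s * s'" c] by (simp add: phi_hom mult.assoc)
qed (auto simp: distrib_left intro: gamma_filt.intros)

lemma gamma_mult: "x \<in> \<gamma> d \<Longrightarrow> y \<in> \<gamma> e \<Longrightarrow> x * y \<in> \<gamma> (d + e)"
proof (induction x rule: gamma_filt.induct)
  case (gen Ls s)
  from gen.prems show ?case
  proof (induction y rule: gamma_filt.induct)
    case (gen Ms s')
    have "phi s * prod_list (map (\<lambda>L. c L 1) Ls) * (phi s' * prod_list (map (\<lambda>L. c L 1) Ms))
        = phi (s * s') * prod_list (map (\<lambda>L. c L 1) (Ls @ Ms))"
      by (simp add: phi_hom ac_simps)
    then show ?case
      using gen.hyps \<open>set Ls \<subseteq> P\<close> \<open>d \<le> length Ls\<close>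
        gamma_filt.gen[of "Ls @ Ms" P "d + e" phi "s * s'" c] by simp
  qed (auto simp: distrib_left intro: gamma_filt.intros)
qed (auto simp: distrib_right intro: gamma_filt.intros)

sublocale gamma: multiplicative_filtration \<gamma>
proof
  show "- x \<in> \<gamma> d" if "x \<in> \<gamma> d" for x d
    using gamma_scale[OF that, of "- 1"] by (simp add: phi_minus_one)
  show "1 \<in> \<gamma> 0"
    using gamma_filt.gen[of "[]" P 0 phi 1 c] by (simp add: phi_hom)
  show "\<gamma> e \<subseteq> \<gamma> d" if "d \<le> e" for d e
  proof
    show "x \<in> \<gamma> d" if "x \<in> \<gamma> e" for x
      using that
    proof induction
      case (gen Ls s)
      then show ?case using \<open>d \<le> e\<close> by (intro gamma_filt.gen) auto
    qed (auto intro: gamma_filt.intros)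
  qed
qed (auto intro: gamma_filt.intros gamma_mult)

lemma c1_mem: "L \<in> P \<Longrightarrow> c L 1 \<in> \<gamma> 1"
  using gamma_filt.gen[of "[L]" P 1 phi 1 c] by (simp add: phi_hom)

text \<open>c_1 is additive on tensor products modulo gamma^2: the formal group law is
  x + y plus terms of total degree \<ge> 2.\<close>
lemma c1_tensor:
  assumes "L \<in> P" "M \<in> P"
  shows "c (L * M) 1 - c L 1 - c M 1 \<in> \<gamma> 2"
proof -
  let ?u = "c L 1" and ?v = "c M 1"
  obtain N1 N2 where "?u ^ N1 = 0" "?v ^ N2 = 0" using c1_nilpotent assms by metis
  then have nil: "?u ^ (N1 + N2 + 2) = 0" "?v ^ (N1 + N2 + 2) = 0"
    by (simp_all add: power_add)
  define N where "N = N1 + N2 + 2"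
  define T where "T i j = phi (a i j) * ?u ^ i * ?v ^ j" for i j
  define E where "E ij = (if ij = (1, 0) then ?u else 0) + (if ij = (0, 1) then ?v else 0)"
    for ij :: "nat \<times> nat"
  have term_congr: "T i j - E (i, j) \<in> \<gamma> 2" for i j
  proof (cases "2 \<le> i + j")
    case True
    have "?u ^ i * ?v ^ j \<in> \<gamma> (i + j)"
      using assms by (intro gamma.mult_mem gamma.power_mem c1_mem)
    then have "T i j \<in> \<gamma> (i + j)" unfolding T_def by (metis gamma_scale mult.assoc)
    then show ?thesis using True gamma.antimono by (auto simp: E_def)
  next
    case False
    then consider "i = 0" "j = 0" | "i = 1" "j = 0" | "i = 0" "j = 1" by linarith
    then show ?thesis
      by cases
        (simp_all add: T_def E_def fgl_linear_terms[unfolded One_nat_def] phi_hom gamma.zero_mem)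
  qed
  have "(\<Sum>i<N. \<Sum>j<N. E (i, j)) = (\<Sum>ij\<in>{..<N} \<times> {..<N}. E ij)"
    by (simp add: sum.cartesian_product)
  also have "\<dots> = ?u + ?v"
    unfolding E_def sum.distrib by (subst (1 2) sum.delta) (auto simp: N_def)
  finally have "(\<Sum>i<N. \<Sum>j<N. E (i, j)) = ?u + ?v" .
  moreover have "c (L * M) 1 = (\<Sum>i<N. \<Sum>j<N. T i j)"
    unfolding T_def N_def by (rule c1_tensor_fgl[OF assms nil])
  moreover have "(\<Sum>i<N. \<Sum>j<N. T i j) - (\<Sum>i<N. \<Sum>j<N. E (i, j)) \<in> \<gamma> 2"
    unfolding sum_subtractf[symmetric] by (intro gamma.sum_mem term_congr)
  ultimately show ?thesis by (simp add: diff_diff_add)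
qed

lemma c1_dual: "L \<in> P \<Longrightarrow> c L 1 + c (dual L) 1 \<in> \<gamma> 2"
  using gamma.uminus_mem[OF c1_tensor[of L "dual L"]]
  by (simp add: line_bundles char_class_axioms(3) add.commute)

definition total_class :: "'k \<Rightarrow> 'h fps" where
  "total_class x = Abs_fps (c x)"

lemma total_class_add: "total_class (x + y) = total_class x * total_class y"
  by (rule fps_ext) (simp add: total_class_def fps_mult_nth char_class_axioms(2) atLeast0AtMost)

lemma total_class_one: "total_class 1 = 1"
  by (rule fps_ext) (simp add: total_class_def char_class_axioms(1,3))

lemma total_class_zero: "total_class 0 = 1"
  using total_class_add[of 0 1] by (simp add: total_class_one)

lemma total_class_line: "L \<in> P \<Longrightarrow> total_class L = lfac (c L 1)"
  by (rule fps_ext) (simp add: total_class_def lfac_nth char_class_axioms(1,4))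

lemma total_class_neg_line: "L \<in> P \<Longrightarrow> total_class (- L) = lfac_inv (c L 1)"
  using total_class_add[of L "- L"]
  by (intro inverse_unique_comm[OF _ lfac_times_inv])
    (simp add: total_class_zero total_class_line)

definition koszul_class :: "(nat \<Rightarrow> 'k) \<Rightarrow> nat \<Rightarrow> 'k" where
  "koszul_class L r = (\<Prod>l=1..r. (1 - dual (L l)))"

text \<open>Induction on r, using K_(r+1) = K_r - [L_(r+1)^\<vee>] K_r.\<close>
lemma total_class_koszul_class_congr:
  assumes "\<forall>l\<in>{1..r}. L l \<in> P" and "M \<in> P" and "z \<in> \<gamma> 1" and "c M 1 - z \<in> \<gamma> 2"
  shows "gamma.fil_congr
           (total_class (if s then M * koszul_class L r else - (M * koszul_class L r)))
           (add_model (\<lambda>l. - c (L l) 1) r s z)"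
  using assms
proof (induction r arbitrary: M z s)
  case 0
  note congr = c1_mem[OF \<open>M \<in> P\<close>] \<open>z \<in> \<gamma> 1\<close> \<open>c M 1 - z \<in> \<gamma> 2\<close>
  show ?case
    using gamma.fil_congr_lfac[OF congr] gamma.fil_congr_lfac_inv[OF congr] \<open>M \<in> P\<close>
    by (simp add: koszul_class_def total_class_line total_class_neg_line)
next
  case (Suc r)
  let ?x = "\<lambda>l. - c (L l) 1"
  let ?D = "dual (L (Suc r))"
  let ?sgn = "\<lambda>s y. if s then y else - y"
  let ?K = "koszul_class L r"
  have L: "L (Suc r) \<in> P" and D: "?D \<in> P" using Suc.prems(1) by (auto simp: line_bundles)
  have MD: "M * ?D \<in> P" using Suc.prems(2) D by (rule line_bundles(2))
  have z': "z + ?x (Suc r) \<in> \<gamma> 1"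
    using gamma.diff_mem[OF Suc.prems(3) c1_mem[OF L]] by simp
  have split: "c (M * ?D) 1 - (z + ?x (Suc r))
      = (c (M * ?D) 1 - c M 1 - c ?D 1) + (c M 1 - z) + (c (L (Suc r)) 1 + c ?D 1)"
    by (simp add: algebra_simps)
  have c1_MD: "c (M * ?D) 1 - (z + ?x (Suc r)) \<in> \<gamma> 2"
    unfolding split
    by (rule gamma.add_mem[OF gamma.add_mem[OF c1_tensor[OF Suc.prems(2) D] Suc.prems(4)]
          c1_dual[OF L]])
  have "?sgn s (M * koszul_class L (Suc r)) = ?sgn s (M * ?K) + ?sgn (\<not> s) ((M * ?D) * ?K)"
    by (simp add: koszul_class_def algebra_simps)
  then have "total_class (?sgn s (M * koszul_class L (Suc r)))
      = total_class (?sgn s (M * ?K)) * total_class (?sgn (\<not> s) ((M * ?D) * ?K))"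
    by (simp only: total_class_add)
  moreover have "gamma.fil_congr (total_class (?sgn s (M * ?K))) (add_model ?x r s z)"
    using Suc.IH Suc.prems by simp
  moreover have "gamma.fil_congr (total_class (?sgn (\<not> s) ((M * ?D) * ?K)))
      (add_model ?x r (\<not> s) (z + ?x (Suc r)))"
    using Suc.IH[OF _ MD z' c1_MD] Suc.prems(1) by simp
  ultimately show ?case by (simp add: gamma.fil_congr_mult)
qed

end

text \<open>The theorem: take M trivial and z = 0, and read off the r-th coefficient.\<close>
theorem lemma6p2:
  fixes phi :: "'r::comm_ring_1 \<Rightarrow> 'h::comm_ring_1"
    and a :: "nat \<Rightarrow> nat \<Rightarrow> 'r"
    and P :: "'k::comm_ring_1 set"
    and dual :: "'k \<Rightarrow> 'k"
    and c :: "'k \<Rightarrow> nat \<Rightarrow> 'h"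
    and L :: "nat \<Rightarrow> 'k"
    and r :: nat
  assumes "oriented_data phi a P dual c"
    and "r \<ge> 1"
    and "\<forall>l\<in>{1..r}. L l \<in> P"
  shows "c (\<Prod>l=1..r. (1 - dual (L l))) r
           - (-1) ^ (r - 1) * of_nat (fact (r - 1)) * (\<Prod>l=1..r. c (L l) 1)
         \<in> gamma_filt phi P c (r + 1)"
proof -
  interpret oriented_cohomology phi a P dual c by (rule oriented_cohomology.intro) fact
  let ?x = "\<lambda>l. - c (L l) 1"
  have "gamma.fil_congr (total_class (koszul_class L r)) (add_model ?x r True 0)"
    using total_class_koszul_class_congr[OF assms(3) line_bundles(1) gamma.zero_mem, of True]
    by (simp add: char_class_axioms(3) gamma.zero_mem)
  then have "c (koszul_class L r) r - add_model ?x r True 0 $ r \<in> gamma_filt phi P c (r + 1)"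
    by (simp add: gamma.fil_congr_def total_class_def)
  moreover have "add_model ?x r True 0 $ r = of_nat (fact (r - 1)) * - (\<Prod>l=1..r. ?x l)"
    using add_model_coeffs[OF assms(2), of True ?x] by (simp add: one_plus_at_def)
  moreover have "- (\<Prod>l=1..r. ?x l) = (-1) ^ (r - 1) * (\<Prod>l=1..r. c (L l) 1)"
    using assms(2) by (simp add: prod_uminus power_eq_if)
  ultimately show ?thesis
    by (simp only: koszul_class_def mult_ac)
qed

end
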